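(* In the setting described in the context, there exists a constant $C$ (independent of $\gamma$ and $\lambda_0$) such that for every $\gamma \in (0,\frac12)$, every $\lambda_0 > 1$ and every $0 \leq k \leq q$: $|d\hat u_k| \leq C$ at each point of $\mathbb{R}^n$; $\hat u_k$ is a convex function; and the Euclidean Hessian of $\hat u_k$ is bounded in norm by $C\lambda_k$ at each point of $\mathbb{R}^n$.
   Context: $n\ge 3$, $u_0,\dots,u_q$ are non-constant linear (affine) functions on $\mathbb{R}^n$ whose Euclidean gradients are unit vectors, and $\Omega=\bigcap_{m=0}^q\{u_m\le 0\}$ is a compact convex polytope with non-empty interior. Fix a smooth even function $\eta:\mathbb{R}\to\mathbb{R}$ with $\eta(t)=|t|$ for $|t|\ge \frac12$ and $\eta''\ge 0$ everywhere. For $\gamma\in(0,\frac12)$ and $\lambda_0>1$ set $\lambda_0$ as given and $\lambda_k=\gamma^{-k}\lambda_0$ for $1\le k\le q$. Define $\hat u_0=u_0$ and, for $1\le k\le q$, $\hat u_k=\frac12\big(\hat u_{k-1}+u_k+\lambda_k^{-1}\eta(\lambda_k(\hat u_{k-1}-u_k))\big)$. *)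

theory Defs
  imports "HOL-Analysis.Analysis"
begin

definition smooth_real :: "(real \<Rightarrow> real) \<Rightarrow> bool" where
  "smooth_real f \<longleftrightarrow> (\<forall>k x. ((deriv ^^ k) f) differentiable (at x))"

definition lam :: "real \<Rightarrow> real \<Rightarrow> nat \<Rightarrow> real" where
  "lam \<gamma> lam0 k = lam0 / \<gamma> ^ k"

primrec uhat :: "(nat \<Rightarrow> 'a \<Rightarrow> real) \<Rightarrow> (real \<Rightarrow> real) \<Rightarrow> real \<Rightarrow> real \<Rightarrow> nat \<Rightarrow> 'a \<Rightarrow> real" where
  "uhat u \<eta> \<gamma> lam0 0 x = u 0 x"
| "uhat u \<eta> \<gamma> lam0 (Suc k) x =
     (uhat u \<eta> \<gamma> lam0 k x + u (Suc k) x
      + \<eta> (lam \<gamma> lam0 (Suc k) * (uhat u \<eta> \<gamma> lam0 k x - u (Suc k) x)) / lam \<gamma> lam0 (Suc k)) / 2"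

end

theory Submission
  imports Defs
begin

text \<open>
  Let \<open>\<psi>(s) = (s + \<eta>(\<lambda> s) / \<lambda>) / 2\<close> with \<open>\<lambda> = \<lambda>_(k+1)\<close>, a smoothing of \<open>max s 0\<close>; then
  \<open>uhat_(k+1) = u_(k+1) + \<psi>(uhat_k - u_(k+1))\<close>. As \<open>\<eta>\<close> is convex and equals \<open>|t|\<close> for
  \<open>|t| \<ge> 1/2\<close>, we have \<open>0 \<le> \<psi>' \<le> 1\<close> and \<open>0 \<le> \<psi>'' \<le> \<lambda> M / 2\<close>, where \<open>M\<close> bounds the compactly
  supported \<open>\<eta>''\<close>. A convex nondecreasing function of a convex function is convex. The new
  gradient \<open>\<psi>' grad uhat_k + (1 - \<psi>') grad u_(k+1)\<close> is a convex combination of vectors of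
  norm at most 1. The new Hessian is \<open>\<psi>'\<close> times the old one plus the rank-one term
  \<open>\<psi>'' (d \<bullet> h) d\<close> with \<open>d = grad uhat_k - grad u_(k+1)\<close>, \<open>|d| \<le> 2\<close>, which adds at most
  \<open>2 M \<lambda>_(k+1)\<close>. Since \<open>\<lambda>_k = \<gamma> \<lambda>_(k+1) \<le> \<lambda>_(k+1) / 2\<close>, the bound \<open>4 M \<lambda>_k\<close> propagates by
  induction.
\<close>

lemma smooth_real_has_real_derivative:
  assumes "smooth_real f"
  shows "((deriv ^^ k) f has_real_derivative (deriv ^^ Suc k) f x) (at x)"
  using assms by (simp add: smooth_real_def DERIV_deriv_iff_real_differentiable)

lemma smooth_real_continuous_on:
  assumes "smooth_real f"
  shows "continuous_on S ((deriv ^^ k) f)"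
  using assms unfolding smooth_real_def
  by (meson continuous_at_imp_continuous_on differentiable_imp_continuous_within)

lemma bounded_if_vanishing_outside_cball:
  fixes f :: "'a::{real_normed_vector,heine_borel} \<Rightarrow> 'b::real_normed_vector"
  assumes "continuous_on (cball 0 r) f" and "\<And>x. r < norm x \<Longrightarrow> f x = 0"
  shows "\<exists>B. \<forall>x. norm (f x) \<le> B"
proof -
  have "bounded (f ` cball 0 r)"
    by (intro compact_imp_bounded compact_continuous_image assms(1) compact_cball)
  then obtain B where B: "\<And>x. x \<in> cball 0 r \<Longrightarrow> norm (f x) \<le> B"
    by (metis bounded_iff imageI)
  have "norm (f x) \<le> max B 0" for x
    using B[of x] assms(2)[of x] by (cases "norm x \<le> r") auto
  then show ?thesis by blast
qed

lemma mono_if_has_real_derivative_nonneg: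
  fixes f f' :: "real \<Rightarrow> real"
  assumes "\<And>s. (f has_real_derivative f' s) (at s)" and "\<And>s. 0 \<le> f' s"
  shows "mono f"
proof (rule monoI)
  fix x y :: real
  assume "x \<le> y"
  then show "f x \<le> f y"
    by (rule DERIV_nonneg_imp_nondecreasing) (use assms in blast)
qed

lemma convex_on_if_second_deriv_nonneg:
  fixes \<psi> \<psi>' \<psi>'' :: "real \<Rightarrow> real"
  assumes "\<And>s. (\<psi> has_real_derivative \<psi>' s) (at s)"
    and "\<And>s. (\<psi>' has_real_derivative \<psi>'' s) (at s)" and "\<And>s. 0 \<le> \<psi>'' s"
  shows "convex_on UNIV \<psi>"
proof (rule convex_on_realI[OF connected_UNIV assms(1)])
  show "\<psi>' x \<le> \<psi>' y" if "x \<le> y" for x y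
    using mono_if_has_real_derivative_nonneg[OF assms(2,3)] that by (rule monoD)
qed

lemma open_nbhd_same_sgn:
  fixes r t :: real
  assumes "0 \<le> r" and "r < \<bar>t\<bar>"
  obtains S where "open S" "t \<in> S" "\<And>s. s \<in> S \<Longrightarrow> r < \<bar>s\<bar> \<and> sgn s = sgn t"
proof (cases "0 < t")
  case True
  show ?thesis
    by (rule that[of "{r<..}"]) (use True assms in \<open>auto simp: sgn_if\<close>)
next
  case False
  then have "t < -r"
    using assms by auto
  show ?thesis
    by (rule that[of "{..<-r}"]) (use \<open>t < -r\<close> assms in \<open>auto simp: sgn_if\<close>)
qed

lemma deriv_eq_sgn_if_eq_abs:
  fixes \<eta> \<eta>' :: "real \<Rightarrow> real"
  assumes "\<And>t. (\<eta> has_real_derivative \<eta>' t) (at t)"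
    and "\<And>t. r \<le> \<bar>t\<bar> \<Longrightarrow> \<eta> t = \<bar>t\<bar>" and "0 \<le> r" and "r < \<bar>t\<bar>"
  shows "\<eta>' t = sgn t"
proof -
  obtain S where S: "open S" "t \<in> S" and S_sgn: "\<And>s. s \<in> S \<Longrightarrow> r < \<bar>s\<bar> \<and> sgn s = sgn t"
    using open_nbhd_same_sgn[OF assms(3,4)] by blast
  have "sgn t * s = \<eta> s" if "s \<in> S" for s
  proof -
    have "r < \<bar>s\<bar>" and "sgn s = sgn t"
      using S_sgn[OF that] by auto
    then show ?thesis
      using assms(2)[of s] abs_sgn[of s] by (simp add: mult.commute)
  qed
  then have "(\<eta> has_real_derivative sgn t) (at t)"
    using has_field_derivative_transform_within_open[OF DERIV_cmult_Id S] by simp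
  then show ?thesis
    using assms(1) DERIV_unique by blast
qed

lemma second_deriv_eq_0_if_eq_abs:
  fixes \<eta> \<eta>' \<eta>'' :: "real \<Rightarrow> real"
  assumes d0: "\<And>t. (\<eta> has_real_derivative \<eta>' t) (at t)"
    and d1: "\<And>t. (\<eta>' has_real_derivative \<eta>'' t) (at t)"
    and "\<And>t. r \<le> \<bar>t\<bar> \<Longrightarrow> \<eta> t = \<bar>t\<bar>" and "0 \<le> r" and "r < \<bar>t\<bar>"
  shows "\<eta>'' t = 0"
proof -
  obtain S where S: "open S" "t \<in> S" and S_sgn: "\<And>s. s \<in> S \<Longrightarrow> r < \<bar>s\<bar> \<and> sgn s = sgn t"
    using open_nbhd_same_sgn[OF assms(4,5)] by blast
  have "sgn t = \<eta>' s" if "s \<in> S" for s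
    using S_sgn[OF that] deriv_eq_sgn_if_eq_abs[OF d0 assms(3,4), of s] by simp
  then have "(\<eta>' has_real_derivative 0) (at t)"
    using has_field_derivative_transform_within_open[OF DERIV_const[of "sgn t"] S] by blast
  then show ?thesis
    using d1 DERIV_unique by blast
qed

lemma abs_deriv_le_1_if_eq_abs:
  fixes \<eta> \<eta>' \<eta>'' :: "real \<Rightarrow> real"
  assumes d0: "\<And>t. (\<eta> has_real_derivative \<eta>' t) (at t)"
    and d1: "\<And>t. (\<eta>' has_real_derivative \<eta>'' t) (at t)"
    and "\<And>t. 0 \<le> \<eta>'' t"
    and "\<And>t. r \<le> \<bar>t\<bar> \<Longrightarrow> \<eta> t = \<bar>t\<bar>" and "0 \<le> r"
  shows "\<bar>\<eta>' t\<bar> \<le> 1"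
proof -
  have "mono \<eta>'"
    using d1 assms(3) by (rule mono_if_has_real_derivative_nonneg)
  then have "\<eta>' (min t (-r-1)) \<le> \<eta>' t" and "\<eta>' t \<le> \<eta>' (max t (r+1))"
    by (rule monoD; simp)+
  moreover have "\<eta>' (min t (-r-1)) = -1" "\<eta>' (max t (r+1)) = 1"
    using deriv_eq_sgn_if_eq_abs[OF d0 assms(4,5)] assms(5) by auto
  ultimately show ?thesis
    by linarith
qed

lemma smooth_convex_eq_abs_deriv_bounds:
  fixes \<eta> :: "real \<Rightarrow> real"
  assumes "smooth_real \<eta>" and "\<And>t. r \<le> \<bar>t\<bar> \<Longrightarrow> \<eta> t = \<bar>t\<bar>" and "0 \<le> r"
    and "\<And>t. 0 \<le> deriv (deriv \<eta>) t"
  obtains M where "\<And>t. \<bar>deriv \<eta> t\<bar> \<le> 1" and "\<And>t. deriv (deriv \<eta>) t \<le> M"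
proof -
  have d0: "(\<eta> has_real_derivative deriv \<eta> t) (at t)" for t
    using smooth_real_has_real_derivative[OF assms(1), of 0] by simp
  have d1: "(deriv \<eta> has_real_derivative deriv (deriv \<eta>) t) (at t)" for t
    using smooth_real_has_real_derivative[OF assms(1), of 1] by simp
  have "continuous_on (cball 0 r) (deriv (deriv \<eta>))"
    using smooth_real_continuous_on[OF assms(1), of _ 2] by (simp add: numeral_2_eq_2)
  moreover have "deriv (deriv \<eta>) t = 0" if "r < norm t" for t
    using second_deriv_eq_0_if_eq_abs[OF d0 d1 assms(2,3)] that by simp
  ultimately obtain M where M: "\<And>t. norm (deriv (deriv \<eta>) t) \<le> M"
    using bounded_if_vanishing_outside_cball by blast
  show ?thesis
  proof (rule that)
    show "\<bar>deriv \<eta> t\<bar> \<le> 1" for t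
      using abs_deriv_le_1_if_eq_abs[OF d0 d1 assms(4,2,3)] .
    show "deriv (deriv \<eta>) t \<le> M" for t
      using M[of t] by simp
  qed
qed

lemma convex_on_inner_affine: "convex S \<Longrightarrow> convex_on S (\<lambda>x. c \<bullet> x + b)"
  by (rule convex_onI) (auto simp: algebra_simps)

lemma concave_on_inner_affine: "convex S \<Longrightarrow> concave_on S (\<lambda>x. c \<bullet> x + b)"
  by (simp add: concave_on_iff algebra_simps flip: distrib_right)

lemma convex_on_mono_comp:
  fixes f :: "'a::real_vector \<Rightarrow> real"
  assumes "convex_on S f" and "convex_on UNIV \<psi>" and "mono \<psi>"
  shows "convex_on S (\<lambda>x. \<psi> (f x))"
proof (rule convex_onI)
  fix t :: real and x y assume t: "0 < t" "t < 1" and xy: "x \<in> S" "y \<in> S"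
  have "\<psi> (f ((1 - t) *\<^sub>R x + t *\<^sub>R y)) \<le> \<psi> ((1 - t) * f x + t * f y)"
    using convex_onD[OF assms(1)] t xy assms(3) by (auto intro: monoD)
  also have "\<dots> \<le> (1 - t) * \<psi> (f x) + t * \<psi> (f y)"
    using convex_onD[OF assms(2)] t by auto
  finally show "\<psi> (f ((1 - t) *\<^sub>R x + t *\<^sub>R y)) \<le> (1 - t) * \<psi> (f x) + t * \<psi> (f y)" .
next
  show "convex S"
    using assms(1) by (simp add: convex_on_def)
qed

lemma convex_on_affine_plus_comp:
  fixes f :: "'a::real_inner \<Rightarrow> real"
  assumes "convex_on UNIV f" and "convex_on UNIV \<psi>" and "mono \<psi>"
  shows "convex_on UNIV (\<lambda>x. c \<bullet> x + b + \<psi> (f x - (c \<bullet> x + b)))"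
proof -
  have "convex_on UNIV (\<lambda>x. f x - (c \<bullet> x + b))"
    by (intro convex_on_diff assms(1) concave_on_inner_affine convex_UNIV)
  then have "convex_on UNIV (\<lambda>x. \<psi> (f x - (c \<bullet> x + b)))"
    using assms(2,3) by (rule convex_on_mono_comp)
  then show ?thesis
    by (intro convex_on_add convex_on_inner_affine convex_UNIV)
qed

lemma has_derivative_affine_plus_comp:
  fixes f :: "'a::real_inner \<Rightarrow> real" and c :: 'a and b :: real
  defines "r \<equiv> \<lambda>x. f x - (c \<bullet> x + b)"
  assumes "(f has_derivative (\<lambda>h. gf \<bullet> h)) (at x)"
    and "(\<psi> has_real_derivative \<psi>' (r x)) (at (r x))"
  shows "((\<lambda>x. c \<bullet> x + b + \<psi> (r x)) has_derivative
           (\<lambda>h. (c + \<psi>' (r x) *\<^sub>R (gf - c)) \<bullet> h)) (at x)"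
proof -
  have "(r has_derivative (\<lambda>h. (gf - c) \<bullet> h)) (at x)"
    unfolding r_def using assms(2)
    by (auto intro!: derivative_eq_intros simp: inner_diff_left)
  from has_derivative_compose[OF this assms(3)[unfolded has_field_derivative_def]]
  have "((\<lambda>x. \<psi> (r x)) has_derivative (\<lambda>h. \<psi>' (r x) * ((gf - c) \<bullet> h))) (at x)" .
  then show ?thesis
    by (auto intro!: derivative_eq_intros simp: inner_add_left)
qed

lemma has_derivative_affine_plus_comp_gradient:
  fixes f :: "'a::real_inner \<Rightarrow> real" and c :: 'a and b :: real
  defines "r \<equiv> \<lambda>x. f x - (c \<bullet> x + b)"
  assumes "(f has_derivative (\<lambda>h. gf x \<bullet> h)) (at x)"
    and "(gf has_derivative Hf) (at x)"
    and "(\<psi>' has_real_derivative \<psi>'' (r x)) (at (r x))"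
  shows "((\<lambda>x. c + \<psi>' (r x) *\<^sub>R (gf x - c)) has_derivative
           (\<lambda>h. \<psi>' (r x) *\<^sub>R Hf h + (\<psi>'' (r x) * ((gf x - c) \<bullet> h)) *\<^sub>R (gf x - c))) (at x)"
proof -
  have "(r has_derivative (\<lambda>h. (gf x - c) \<bullet> h)) (at x)"
    unfolding r_def using assms(2)
    by (auto intro!: derivative_eq_intros simp: inner_diff_left)
  from has_derivative_compose[OF this assms(4)[unfolded has_field_derivative_def]]
  have "((\<lambda>x. \<psi>' (r x)) has_derivative (\<lambda>h. \<psi>'' (r x) * ((gf x - c) \<bullet> h))) (at x)" .
  then show ?thesis
    using assms(3) by (auto intro!: derivative_eq_intros simp: algebra_simps)
qed

lemma onorm_scaleR_plus_rank_one_le: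
  fixes A :: "'a::euclidean_space \<Rightarrow> 'a"
  assumes "bounded_linear A" and "onorm A \<le> B"
    and "0 \<le> t" and "t \<le> 1" and "0 \<le> s"
  shows "onorm (\<lambda>h. t *\<^sub>R A h + (s * (d \<bullet> h)) *\<^sub>R d) \<le> B + s * norm d ^ 2"
proof (rule onorm_le)
  fix h
  have "norm (t *\<^sub>R A h) \<le> norm (A h)"
    using assms(3,4) by (simp add: mult_left_le_one_le)
  also have "\<dots> \<le> B * norm h"
    using onorm[OF assms(1), of h] assms(2) by (meson mult_right_mono norm_ge_zero order_trans)
  finally have "norm (t *\<^sub>R A h) \<le> B * norm h" .
  moreover have "norm ((s * (d \<bullet> h)) *\<^sub>R d) \<le> s * norm d ^ 2 * norm h"
  proof -
    have "norm ((s * (d \<bullet> h)) *\<^sub>R d) = s * \<bar>d \<bullet> h\<bar> * norm d"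
      using assms(5) by (simp add: abs_mult)
    also have "\<dots> \<le> s * (norm d * norm h) * norm d"
      using assms(5) Cauchy_Schwarz_ineq2[of d h] by (intro mult_right_mono mult_left_mono) auto
    finally show ?thesis
      by (simp add: power2_eq_square algebra_simps)
  qed
  ultimately show "norm (t *\<^sub>R A h + (s * (d \<bullet> h)) *\<^sub>R d) \<le> (B + s * norm d ^ 2) * norm h"
    using norm_triangle_ineq[of "t *\<^sub>R A h" "(s * (d \<bullet> h)) *\<^sub>R d"]
    by (simp add: distrib_right)
qed

definition C2_bounds :: "('a::euclidean_space \<Rightarrow> real) \<Rightarrow> real \<Rightarrow> real \<Rightarrow> bool" where
  "C2_bounds f G B \<longleftrightarrow> (\<exists>g H. \<forall>x. (f has_derivative (\<lambda>h. g x \<bullet> h)) (at x) \<and>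
     (g has_derivative H x) (at x) \<and> norm (g x) \<le> G \<and> onorm (H x) \<le> B)"

lemma C2_bounds_mono: "C2_bounds f G B \<Longrightarrow> G \<le> G' \<Longrightarrow> B \<le> B' \<Longrightarrow> C2_bounds f G' B'"
  unfolding C2_bounds_def by (blast intro: order_trans)

lemma C2_bounds_inner_affine: "norm c \<le> G \<Longrightarrow> 0 \<le> B \<Longrightarrow> C2_bounds (\<lambda>x. c \<bullet> x + b) G B"
  unfolding C2_bounds_def
  by (intro exI[of _ "\<lambda>x. c"] exI[of _ "\<lambda>x h. 0"]) (auto intro!: derivative_eq_intros simp: onorm_zero)

lemma C2_bounds_affine_plus_comp:
  fixes f :: "'a::euclidean_space \<Rightarrow> real"
  assumes "C2_bounds f 1 B"
    and "\<And>s. (\<psi> has_real_derivative \<psi>' s) (at s)"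
    and "\<And>s. (\<psi>' has_real_derivative \<psi>'' s) (at s)"
    and "\<And>s. 0 \<le> \<psi>' s \<and> \<psi>' s \<le> 1" and "\<And>s. 0 \<le> \<psi>'' s \<and> \<psi>'' s \<le> K"
    and "norm c \<le> 1"
  shows "C2_bounds (\<lambda>x. c \<bullet> x + b + \<psi> (f x - (c \<bullet> x + b))) 1 (B + 4 * K)"
proof -
  obtain gf Hf where f: "\<And>x. (f has_derivative (\<lambda>h. gf x \<bullet> h)) (at x)"
    "\<And>x. (gf has_derivative Hf x) (at x)" "\<And>x. norm (gf x) \<le> 1" "\<And>x. onorm (Hf x) \<le> B"
    using assms(1) unfolding C2_bounds_def by blast
  define r where "r x = f x - (c \<bullet> x + b)" for x
  define g where "g x = c + \<psi>' (r x) *\<^sub>R (gf x - c)" for x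
  define H where "H x h = \<psi>' (r x) *\<^sub>R Hf x h + (\<psi>'' (r x) * ((gf x - c) \<bullet> h)) *\<^sub>R (gf x - c)"
    for x h
  have "((\<lambda>x. c \<bullet> x + b + \<psi> (f x - (c \<bullet> x + b))) has_derivative (\<lambda>h. g x \<bullet> h)) (at x)" for x
    unfolding g_def r_def
    by (intro has_derivative_affine_plus_comp f(1) assms(2))
  moreover have "(g has_derivative H x) (at x)" for x
    unfolding g_def H_def r_def
    by (intro has_derivative_affine_plus_comp_gradient f(1,2) assms(3))
  moreover have "norm (g x) \<le> 1" for x
  proof -
    have "g x = (1 - \<psi>' (r x)) *\<^sub>R c + \<psi>' (r x) *\<^sub>R gf x"
      by (simp add: g_def algebra_simps)
    also have "\<dots> \<in> cball 0 1"
      using assms(4,6) f(3) by (intro convexD convex_cball) auto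
    finally show ?thesis
      by simp
  qed
  moreover have "onorm (H x) \<le> B + 4 * K" for x
  proof -
    have "onorm (H x) \<le> B + \<psi>'' (r x) * norm (gf x - c) ^ 2"
      unfolding H_def using f(2,4) assms(4,5)
      by (intro onorm_scaleR_plus_rank_one_le has_derivative_bounded_linear) auto
    moreover have "norm (gf x - c) \<le> 2"
      using norm_triangle_ineq4[of "gf x" c] f(3)[of x] assms(6) by linarith
    then have "\<psi>'' (r x) * norm (gf x - c) ^ 2 \<le> K * 2 ^ 2"
      using assms(5)[of "r x"] by (intro mult_mono power_mono) auto
    ultimately show ?thesis
      by simp
  qed
  ultimately show ?thesis
    unfolding C2_bounds_def by blast
qed

text \<open>For \<open>\<eta> = abs\<close> and \<open>l > 0\<close> this is \<open>max s 0\<close>.\<close>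
definition soft_pos :: "(real \<Rightarrow> real) \<Rightarrow> real \<Rightarrow> real \<Rightarrow> real" where
  "soft_pos \<eta> l s = (s + \<eta> (l * s) / l) / 2"

lemma uhat_Suc_eq_soft_pos:
  "uhat u \<eta> \<gamma> lam0 (Suc k) x =
     u (Suc k) x + soft_pos \<eta> (lam \<gamma> lam0 (Suc k)) (uhat u \<eta> \<gamma> lam0 k x - u (Suc k) x)"
  by (simp add: soft_pos_def field_simps)

lemma soft_pos_has_real_derivative:
  assumes "\<And>t. (\<eta> has_real_derivative \<eta>' t) (at t)" and "l \<noteq> 0"
  shows "(soft_pos \<eta> l has_real_derivative (1 + \<eta>' (l * s)) / 2) (at s)"
  unfolding soft_pos_def[abs_def] using assms
  by (auto intro!: derivative_eq_intros DERIV_chain2[OF assms(1)] simp: field_simps)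

lemma soft_pos_deriv_has_real_derivative:
  assumes "\<And>t. (\<eta>' has_real_derivative \<eta>'' t) (at t)"
  shows "((\<lambda>s. (1 + \<eta>' (l * s)) / 2) has_real_derivative l * \<eta>'' (l * s) / 2) (at s)"
  by (auto intro!: derivative_eq_intros DERIV_chain2[OF assms(1)] simp: field_simps)

lemma convex_C2_bounds_affine_plus_soft_pos:
  fixes f :: "'a::euclidean_space \<Rightarrow> real" and \<eta> \<eta>' \<eta>'' :: "real \<Rightarrow> real"
  assumes "convex_on UNIV f" and "C2_bounds f 1 B"
    and d0: "\<And>t. (\<eta> has_real_derivative \<eta>' t) (at t)"
    and d1: "\<And>t. (\<eta>' has_real_derivative \<eta>'' t) (at t)"
    and \<eta>'_bound: "\<And>t. \<bar>\<eta>' t\<bar> \<le> 1" and \<eta>''_bound: "\<And>t. 0 \<le> \<eta>'' t \<and> \<eta>'' t \<le> M"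
    and "0 < l" and "norm c \<le> 1"
  shows "convex_on UNIV (\<lambda>x. c \<bullet> x + b + soft_pos \<eta> l (f x - (c \<bullet> x + b))) \<and>
    C2_bounds (\<lambda>x. c \<bullet> x + b + soft_pos \<eta> l (f x - (c \<bullet> x + b))) 1 (B + 2 * M * l)"
proof
  have d\<psi>: "(soft_pos \<eta> l has_real_derivative (1 + \<eta>' (l * s)) / 2) (at s)" for s
    using d0 \<open>0 < l\<close> by (intro soft_pos_has_real_derivative) auto
  have d\<psi>': "((\<lambda>s. (1 + \<eta>' (l * s)) / 2) has_real_derivative l * \<eta>'' (l * s) / 2) (at s)" for s
    using d1 by (rule soft_pos_deriv_has_real_derivative)
  have \<psi>'_bound: "0 \<le> (1 + \<eta>' (l * s)) / 2 \<and> (1 + \<eta>' (l * s)) / 2 \<le> 1" for s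
    using \<eta>'_bound[of "l * s"] by (simp add: abs_le_iff)
  have \<psi>''_bound: "0 \<le> l * \<eta>'' (l * s) / 2 \<and> l * \<eta>'' (l * s) / 2 \<le> l * M / 2" for s
    using \<eta>''_bound[of "l * s"] \<open>0 < l\<close> by (simp add: mult_left_mono)
  have "convex_on UNIV (soft_pos \<eta> l)"
    using convex_on_if_second_deriv_nonneg[OF d\<psi> d\<psi>'] \<psi>''_bound by blast
  moreover have "mono (soft_pos \<eta> l)"
    using mono_if_has_real_derivative_nonneg[OF d\<psi>] \<psi>'_bound by blast
  ultimately show "convex_on UNIV (\<lambda>x. c \<bullet> x + b + soft_pos \<eta> l (f x - (c \<bullet> x + b)))"
    using assms(1) convex_on_affine_plus_comp by blast
  have "C2_bounds (\<lambda>x. c \<bullet> x + b + soft_pos \<eta> l (f x - (c \<bullet> x + b))) 1 (B + 4 * (l * M / 2))"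
    by (rule C2_bounds_affine_plus_comp[OF assms(2) d\<psi> d\<psi>' \<psi>'_bound \<psi>''_bound assms(8)])
  then show "C2_bounds (\<lambda>x. c \<bullet> x + b + soft_pos \<eta> l (f x - (c \<bullet> x + b))) 1 (B + 2 * M * l)"
    by (simp add: algebra_simps)
qed

lemma uhat_convex_C2_bounds:
  fixes u :: "nat \<Rightarrow> 'a::euclidean_space \<Rightarrow> real" and \<eta> \<eta>' \<eta>'' :: "real \<Rightarrow> real"
  assumes affine_u: "\<And>m. m \<le> q \<Longrightarrow> \<exists>c b. norm c \<le> 1 \<and> (\<forall>x. u m x = c \<bullet> x + b)"
    and d0: "\<And>t. (\<eta> has_real_derivative \<eta>' t) (at t)"
    and d1: "\<And>t. (\<eta>' has_real_derivative \<eta>'' t) (at t)"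
    and \<eta>'_bound: "\<And>t. \<bar>\<eta>' t\<bar> \<le> 1" and \<eta>''_bound: "\<And>t. 0 \<le> \<eta>'' t \<and> \<eta>'' t \<le> M"
    and \<gamma>: "0 < \<gamma>" "\<gamma> \<le> 1/2" and "0 < lam0"
  shows "k \<le> q \<Longrightarrow> convex_on UNIV (uhat u \<eta> \<gamma> lam0 k) \<and>
    C2_bounds (uhat u \<eta> \<gamma> lam0 k) 1 (4 * M * lam \<gamma> lam0 k)"
proof (induction k)
  case 0
  obtain c b where "norm c \<le> 1" and "\<And>x. u 0 x = c \<bullet> x + b"
    using affine_u by blast
  moreover have "0 \<le> 4 * M * lam \<gamma> lam0 0"
    using \<eta>''_bound[of 0] \<open>0 < lam0\<close> by (simp add: lam_def)
  moreover have "uhat u \<eta> \<gamma> lam0 0 = (\<lambda>x. c \<bullet> x + b)"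
    using calculation(2) by (simp add: fun_eq_iff)
  ultimately show ?case
    by (simp add: convex_on_inner_affine C2_bounds_inner_affine)
next
  case (Suc k)
  define l where "l = lam \<gamma> lam0 (Suc k)"
  have "0 < l"
    using \<gamma> \<open>0 < lam0\<close> by (simp add: l_def lam_def)
  obtain c b where c: "norm c \<le> 1" and u: "\<And>x. u (Suc k) x = c \<bullet> x + b"
    using affine_u Suc.prems by blast
  have "uhat u \<eta> \<gamma> lam0 (Suc k) =
      (\<lambda>x. c \<bullet> x + b + soft_pos \<eta> l (uhat u \<eta> \<gamma> lam0 k x - (c \<bullet> x + b)))"
    by (rule ext) (simp only: uhat_Suc_eq_soft_pos u l_def)
  moreover have "convex_on UNIV (uhat u \<eta> \<gamma> lam0 k)"
    and "C2_bounds (uhat u \<eta> \<gamma> lam0 k) 1 (4 * M * lam \<gamma> lam0 k)"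
    using Suc by simp_all
  ultimately have "convex_on UNIV (uhat u \<eta> \<gamma> lam0 (Suc k))"
    and "C2_bounds (uhat u \<eta> \<gamma> lam0 (Suc k)) 1 (4 * M * lam \<gamma> lam0 k + 2 * M * l)"
    using convex_C2_bounds_affine_plus_soft_pos[OF _ _ d0 d1 \<eta>'_bound \<eta>''_bound \<open>0 < l\<close> c]
    by simp_all
  moreover have "4 * M * lam \<gamma> lam0 k + 2 * M * l \<le> 4 * M * l"
  proof -
    \<comment> \<open>This is where \<open>\<gamma> \<le> 1/2\<close> is used.\<close>
    have "lam \<gamma> lam0 k = \<gamma> * l"
      using \<gamma> by (simp add: l_def lam_def)
    moreover have "M * l * \<gamma> \<le> M * l * (1/2)"
      using \<gamma> \<open>0 < l\<close> \<eta>''_bound[of 0] by (intro mult_left_mono) auto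
    ultimately show ?thesis
      by (simp add: algebra_simps)
  qed
  ultimately show ?case
    unfolding l_def using C2_bounds_mono by blast
qed

theorem lemma2p8:
  fixes u :: "nat \<Rightarrow> real ^ 'n \<Rightarrow> real" and q :: nat and \<eta> :: "real \<Rightarrow> real"
  assumes dim: "CARD('n) \<ge> 3"
    and affine_u: "\<forall>m\<le>q. \<exists>a b. norm a = 1 \<and> (\<forall>x. u m x = a \<bullet> x + b)"
    and Omega_compact: "compact {x. \<forall>m\<le>q. u m x \<le> 0}"
    and Omega_int: "interior {x. \<forall>m\<le>q. u m x \<le> 0} \<noteq> {}"
    and eta_smooth: "smooth_real \<eta>"
    and eta_even: "\<forall>t. \<eta> (- t) = \<eta> t"
    and eta_abs: "\<forall>t. \<bar>t\<bar> \<ge> 1/2 \<longrightarrow> \<eta> t = \<bar>t\<bar>"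
    and eta_convex: "\<forall>t. deriv (deriv \<eta>) t \<ge> 0"
  shows "\<exists>C. \<forall>\<gamma> lam0 k. 0 < \<gamma> \<and> \<gamma> < 1/2 \<and> lam0 > 1 \<and> k \<le> q \<longrightarrow>
           convex_on UNIV (uhat u \<eta> \<gamma> lam0 k) \<and>
           (\<exists>g H. \<forall>x.
              (uhat u \<eta> \<gamma> lam0 k has_derivative (\<lambda>h. g x \<bullet> h)) (at x) \<and>
              (g has_derivative H x) (at x) \<and>
              norm (g x) \<le> C \<and>
              onorm (H x) \<le> C * lam \<gamma> lam0 k)"
proof -
  have d0: "(\<eta> has_real_derivative deriv \<eta> t) (at t)" for t
    using smooth_real_has_real_derivative[OF eta_smooth, of 0] by simp
  have d1: "(deriv \<eta> has_real_derivative deriv (deriv \<eta>) t) (at t)" for t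
    using smooth_real_has_real_derivative[OF eta_smooth, of 1] by simp
  obtain M where \<eta>'_bound: "\<And>t. \<bar>deriv \<eta> t\<bar> \<le> 1" and "\<And>t. deriv (deriv \<eta>) t \<le> M"
    using smooth_convex_eq_abs_deriv_bounds[OF eta_smooth, of "1/2"] eta_abs eta_convex by auto
  with eta_convex have \<eta>''_bound: "0 \<le> deriv (deriv \<eta>) t \<and> deriv (deriv \<eta>) t \<le> M" for t
    by blast
  have affine_u': "\<exists>c b. norm c \<le> 1 \<and> (\<forall>x. u m x = c \<bullet> x + b)" if "m \<le> q" for m
    using affine_u that by (metis order_refl)
  show ?thesis
    unfolding C2_bounds_def[symmetric]
  proof (intro exI[of _ "max 1 (4 * M)"] allI impI)
    fix \<gamma> lam0 :: real and k assume params: "0 < \<gamma> \<and> \<gamma> < 1/2 \<and> lam0 > 1 \<and> k \<le> q"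
    then have "convex_on UNIV (uhat u \<eta> \<gamma> lam0 k) \<and>
        C2_bounds (uhat u \<eta> \<gamma> lam0 k) 1 (4 * M * lam \<gamma> lam0 k)"
      using uhat_convex_C2_bounds[OF affine_u' d0 d1 \<eta>'_bound \<eta>''_bound] by auto
    moreover have "4 * M * lam \<gamma> lam0 k \<le> max 1 (4 * M) * lam \<gamma> lam0 k"
      using params by (intro mult_right_mono) (auto simp: lam_def)
    ultimately show "convex_on UNIV (uhat u \<eta> \<gamma> lam0 k) \<and>
        C2_bounds (uhat u \<eta> \<gamma> lam0 k) (max 1 (4 * M)) (max 1 (4 * M) * lam \<gamma> lam0 k)"
      using C2_bounds_mono[of _ 1 _ "max 1 (4 * M)"] by auto
  qed
qed

end
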